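(* Consider the ring grooming instance with $n=9$, $c=1$ and traffic demands $\{1,2\},\{1,3\},\{2,3\},\{4,5\},\{4,6\},\{5,6\},\{7,8\},\{7,9\},\{8,9\}$ (each once). Then: (i) the minimum number of ADMs is $m=9$; (ii) every feasible routing achieving $9$ ADMs uses at least $3$ rings carrying traffic; (iii) there is a feasible routing using only $2$ rings carrying traffic; hence the number of rings carrying traffic and the number of ADMs cannot be minimized simultaneously for this instance.
   Context: Ring grooming. An instance consists of integers $n\ge 2$ (ring size) and $c\ge 1$ (capacity), and a finite list $L$ of unordered pairs $\{j,k\}$ with $j\ne k$, $j,k\in\{1,\dots,n\}$ (repetitions allowed); these are the traffic demands. Let $d_{jk}=d_{kj}$ be the number of times $\{j,k\}$ occurs in $L$ (the traffic matrix; $d_{jj}=0$). Let $C_n$ be the cycle graph on vertices $1,\dots,n$ in cyclic order, with edges $\{l,l+1\}$ for $1\le l<n$ and $\{n,1\}$. A solution uses some finite number $r$ of "rings", each a copy of $C_n$ in which every edge has capacity $c$. A routing specifies, for every ring $i$ and every pair $j<k$, nonnegative integers $t^0_{ijk},t^1_{ijk}$: the amounts of $\{j,k\}$-traffic sent on ring $i$ along each of the two arcs of $C_n$ between $j$ and $k$. It is feasible if $\sum_i (t^0_{ijk}+t^1_{ijk})=d_{jk}$ for all $j<k$, and for every ring $i$ and every edge $e$ of $C_n$ the total traffic routed on ring $i$ along arcs containing $e$ is at most $c$. Ring $i$ needs an ADM (add/drop multiplexer) at vertex $j$ iff some traffic with endpoint $j$ is routed on ring $i$. The cost of a routing is the total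 number of ADMs, i.e. the number of pairs (ring $i$, vertex $j$) at which an ADM is needed. $m=m(n,c,L)$ denotes the minimum cost over all feasible routings. *)

theory Defs
  imports Main
begin

text \<open>Vertices of the cycle C_n are 1..n. Edge l (1 \<le> l \<le> n) is
  {l, l+1} for l < n and {n, 1} for l = n. For a pair j < k, arc 0 between j and k is
  the path j, j+1, ..., k (edges l with j \<le> l < k); arc 1 is the complementary arc
  (edges l with l < j or k \<le> l). A routing with r rings is given by t0 t1, where
  t0 i j k / t1 i j k is the amount of {j,k}-traffic (j<k) routed on ring i (i<r)
  along arc 0 / arc 1. Entries outside the index range are irrelevant.\<close>

definition demand :: "(nat \<times> nat) list \<Rightarrow> nat \<Rightarrow> nat \<Rightarrow> nat" where
  "demand L j k = length (filter (\<lambda>p. p = (j, k) \<or> p = (k, j)) L)"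

definition arc0_has_edge :: "nat \<Rightarrow> nat \<Rightarrow> nat \<Rightarrow> bool" where
  "arc0_has_edge j k l \<longleftrightarrow> j \<le> l \<and> l < k"

definition arc1_has_edge :: "nat \<Rightarrow> nat \<Rightarrow> nat \<Rightarrow> bool" where
  "arc1_has_edge j k l \<longleftrightarrow> l < j \<or> k \<le> l"

definition pairs :: "nat \<Rightarrow> (nat \<times> nat) set" where
  "pairs n = {(j, k). 1 \<le> j \<and> j < k \<and> k \<le> n}"

definition edge_load :: "nat \<Rightarrow> (nat \<Rightarrow> nat \<Rightarrow> nat \<Rightarrow> nat) \<Rightarrow> (nat \<Rightarrow> nat \<Rightarrow> nat \<Rightarrow> nat)
    \<Rightarrow> nat \<Rightarrow> nat \<Rightarrow> nat" where
  "edge_load n t0 t1 i l =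
     (\<Sum>(j, k)\<in>pairs n. (if arc0_has_edge j k l then t0 i j k else 0)
                     + (if arc1_has_edge j k l then t1 i j k else 0))"

definition feasible_routing :: "nat \<Rightarrow> nat \<Rightarrow> (nat \<times> nat) list \<Rightarrow> nat
    \<Rightarrow> (nat \<Rightarrow> nat \<Rightarrow> nat \<Rightarrow> nat) \<Rightarrow> (nat \<Rightarrow> nat \<Rightarrow> nat \<Rightarrow> nat) \<Rightarrow> bool" where
  "feasible_routing n c L r t0 t1 \<longleftrightarrow>
     (\<forall>(j, k)\<in>pairs n. (\<Sum>i<r. t0 i j k + t1 i j k) = demand L j k) \<and>
     (\<forall>i<r. \<forall>l\<in>{1..n}. edge_load n t0 t1 i l \<le> c)"

definition needs_adm :: "nat \<Rightarrow> (nat \<Rightarrow> nat \<Rightarrow> nat \<Rightarrow> nat) \<Rightarrow> (nat \<Rightarrow> nat \<Rightarrow> nat \<Rightarrow> nat)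
    \<Rightarrow> nat \<Rightarrow> nat \<Rightarrow> bool" where
  "needs_adm n t0 t1 i v \<longleftrightarrow>
     (\<exists>(j, k)\<in>pairs n. (v = j \<or> v = k) \<and> t0 i j k + t1 i j k > 0)"

definition adm_cost :: "nat \<Rightarrow> nat \<Rightarrow> (nat \<Rightarrow> nat \<Rightarrow> nat \<Rightarrow> nat) \<Rightarrow> (nat \<Rightarrow> nat \<Rightarrow> nat \<Rightarrow> nat) \<Rightarrow> nat" where
  "adm_cost n r t0 t1 = card {(i, v). i < r \<and> v \<in> {1..n} \<and> needs_adm n t0 t1 i v}"

definition rings_carrying :: "nat \<Rightarrow> nat \<Rightarrow> (nat \<Rightarrow> nat \<Rightarrow> nat \<Rightarrow> nat) \<Rightarrow> (nat \<Rightarrow> nat \<Rightarrow> nat \<Rightarrow> nat) \<Rightarrow> nat" where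
  "rings_carrying n r t0 t1 =
     card {i. i < r \<and> (\<exists>(j, k)\<in>pairs n. t0 i j k + t1 i j k > 0)}"

definition min_adms :: "nat \<Rightarrow> nat \<Rightarrow> (nat \<times> nat) list \<Rightarrow> nat" where
  "min_adms n c L = (LEAST m. \<exists>r t0 t1. feasible_routing n c L r t0 t1 \<and> adm_cost n r t0 t1 = m)"

end

theory Submission
  imports Defs
begin

(* Every vertex is an endpoint of a demand, so every routing needs at least 9 ADMs, and
  routing each triangle on its own ring attains 9. With exactly 9 ADMs every vertex has its
  ADM on a single ring, so each triangle lies on a single ring. On a ring of capacity 1 the
  arcs of a triangle p < q < s must be edge-disjoint, which forces the arcs p..q, q..s and
  s..p; these cover the whole ring, so no further demand fits on it, and the three triangles
  need three rings. Without the ADM constraint two rings suffice: one carries the six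
  demands {j, j+1}, the other the three demands {j, j+2}, all along their short arcs. *)

definition pair_load :: "(nat \<Rightarrow> nat \<Rightarrow> nat \<Rightarrow> nat) \<Rightarrow> (nat \<Rightarrow> nat \<Rightarrow> nat \<Rightarrow> nat)
    \<Rightarrow> nat \<Rightarrow> nat \<Rightarrow> nat \<times> nat \<Rightarrow> nat" where
  "pair_load t0 t1 i l = (\<lambda>(j, k). (if arc0_has_edge j k l then t0 i j k else 0)
                                 + (if arc1_has_edge j k l then t1 i j k else 0))"

lemma finite_pairs [simp]: "finite (pairs n)"
  by (rule finite_subset[of _ "{1..n} \<times> {1..n}"]) (auto simp: pairs_def)

lemma edge_load_eq_sum_pair_load: "edge_load n t0 t1 i l = sum (pair_load t0 t1 i l) (pairs n)"
  by (simp add: edge_load_def pair_load_def)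

lemma sum_pair_load_le_edge_load:
  "A \<subseteq> pairs n \<Longrightarrow> sum (pair_load t0 t1 i l) A \<le> edge_load n t0 t1 i l"
  unfolding edge_load_eq_sum_pair_load by (rule sum_mono2) simp_all

lemma edge_load_eq_sum_support:
  assumes "S \<subseteq> pairs n" and "\<And>j k. (j, k) \<in> pairs n - S \<Longrightarrow> t0 i j k = 0 \<and> t1 i j k = 0"
  shows "edge_load n t0 t1 i l = sum (pair_load t0 t1 i l) S"
  unfolding edge_load_eq_sum_pair_load
  by (rule sum.mono_neutral_right) (use assms in \<open>auto simp: pair_load_def\<close>)

lemma triangle_arcs_forced:
  assumes cap: "\<forall>l\<in>{1..n}. edge_load n t0 t1 i l \<le> 1"
    and "1 \<le> p" "p < q" "q < s" "s \<le> n"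
    and pq: "t0 i p q + t1 i p q = 1" and qs: "t0 i q s + t1 i q s = 1"
    and ps: "t0 i p s + t1 i p s = 1"
  shows "t0 i p q = 1 \<and> t0 i q s = 1 \<and> t1 i p s = 1"
proof -
  have T: "{(p, q), (q, s), (p, s)} \<subseteq> pairs n" using assms(2-5) by (auto simp: pairs_def)
  have load: "sum (pair_load t0 t1 i l) {(p, q), (q, s), (p, s)} \<le> 1" if "l \<in> {1..n}" for l
    using le_trans[OF sum_pair_load_le_edge_load[OF T]] cap that by blast
  \<comment> \<open>the loads at the edges p, q and s add up to 3 + t1 i p q + t1 i q s + t0 i p s\<close>
  have "t0 i p q + t1 i q s + t0 i p s \<le> 1"
    using load[of p] assms(2-5) by (simp add: pair_load_def arc0_has_edge_def arc1_has_edge_def)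
  moreover have "t1 i p q + t0 i q s + t0 i p s \<le> 1"
    using load[of q] assms(2-5) by (simp add: pair_load_def arc0_has_edge_def arc1_has_edge_def)
  moreover have "t1 i p q + t1 i q s + t1 i p s \<le> 1"
    using load[of s] assms(2-5) by (simp add: pair_load_def arc0_has_edge_def arc1_has_edge_def)
  ultimately show ?thesis using pq qs ps by linarith
qed

lemma triangle_saturates_ring:
  assumes cap: "\<forall>l\<in>{1..n}. edge_load n t0 t1 i l \<le> 1"
    and tri: "1 \<le> p" "p < q" "q < s" "s \<le> n"
    and "t0 i p q + t1 i p q = 1" "t0 i q s + t1 i q s = 1" "t0 i p s + t1 i p s = 1"
    and jk: "(j, k) \<in> pairs n" "(j, k) \<notin> {(p, q), (q, s), (p, s)}"
  shows "t0 i j k + t1 i j k = 0"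
proof -
  let ?T = "{(p, q), (q, s), (p, s)}"
  have forced: "t0 i p q = 1" "t0 i q s = 1" "t1 i p s = 1"
    using triangle_arcs_forced[OF assms(1-8)] by simp_all
  have "pair_load t0 t1 i l (j, k) = 0" if l: "l \<in> {1..n}" for l
  proof -
    have sub: "insert (j, k) ?T \<subseteq> pairs n" using tri jk(1) by (auto simp: pairs_def)
    have "pair_load t0 t1 i l (j, k) + sum (pair_load t0 t1 i l) ?T
        = sum (pair_load t0 t1 i l) (insert (j, k) ?T)"
      by (rule sum.insert[symmetric, OF _ jk(2)]) simp
    also have "\<dots> \<le> edge_load n t0 t1 i l"
      by (rule sum_pair_load_le_edge_load[OF sub])
    also have "\<dots> \<le> 1" using cap l by blast
    finally have "pair_load t0 t1 i l (j, k) + sum (pair_load t0 t1 i l) ?T \<le> 1" .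
    moreover have "sum (pair_load t0 t1 i l) ?T
        = pair_load t0 t1 i l (p, q) + pair_load t0 t1 i l (q, s) + pair_load t0 t1 i l (p, s)"
      using tri by simp
    moreover have "\<dots> \<ge> 1"
      \<comment> \<open>the forced arcs p..q, q..s and s..p together cover every edge\<close>
      using forced by (auto simp: pair_load_def arc0_has_edge_def arc1_has_edge_def)
    ultimately show ?thesis by linarith
  qed
  \<comment> \<open>edge j lies on arc 0 and edge k on arc 1 of the pair (j, k)\<close>
  from this[of j] this[of k] jk(1) show ?thesis
    by (auto simp: pairs_def pair_load_def arc0_has_edge_def arc1_has_edge_def)
qed

lemma feasible_routing_demand:
  "feasible_routing n c L r t0 t1 \<Longrightarrow> (j, k) \<in> pairs n \<Longrightarrow> (\<Sum>i<r. t0 i j k + t1 i j k) = demand L j k"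
  unfolding feasible_routing_def by blast

lemma feasible_routing_capacity:
  "feasible_routing n c L r t0 t1 \<Longrightarrow> i < r \<Longrightarrow> \<forall>l\<in>{1..n}. edge_load n t0 t1 i l \<le> c"
  unfolding feasible_routing_def by blast

definition demand_vertices :: "nat \<Rightarrow> (nat \<times> nat) list \<Rightarrow> nat set" where
  "demand_vertices n L = {v. \<exists>(j, k)\<in>pairs n. (v = j \<or> v = k) \<and> demand L j k > 0}"

definition adm_sites :: "nat \<Rightarrow> nat \<Rightarrow> (nat \<Rightarrow> nat \<Rightarrow> nat \<Rightarrow> nat) \<Rightarrow> (nat \<Rightarrow> nat \<Rightarrow> nat \<Rightarrow> nat)
    \<Rightarrow> (nat \<times> nat) set" where
  "adm_sites n r t0 t1 = {(i, v). i < r \<and> v \<in> {1..n} \<and> needs_adm n t0 t1 i v}"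

lemma adm_cost_eq_card_adm_sites: "adm_cost n r t0 t1 = card (adm_sites n r t0 t1)"
  by (simp add: adm_cost_def adm_sites_def)

lemma finite_adm_sites: "finite (adm_sites n r t0 t1)"
  by (rule finite_subset[of _ "{..<r} \<times> {1..n}"]) (auto simp: adm_sites_def)

lemma needs_adm_at_endpoints:
  assumes "(j, k) \<in> pairs n" "t0 i j k + t1 i j k > 0"
  shows "needs_adm n t0 t1 i j" "needs_adm n t0 t1 i k"
  using assms unfolding needs_adm_def by auto

lemma demand_vertices_subset_adm_sites:
  assumes "feasible_routing n c L r t0 t1"
  shows "demand_vertices n L \<subseteq> snd ` adm_sites n r t0 t1"
proof
  fix v assume "v \<in> demand_vertices n L"
  then obtain j k where jk: "(j, k) \<in> pairs n" "v = j \<or> v = k" "demand L j k > 0"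
    by (auto simp: demand_vertices_def)
  then have "(\<Sum>i<r. t0 i j k + t1 i j k) \<noteq> 0" using feasible_routing_demand[OF assms] by simp
  then obtain i where "i \<in> {..<r}" "t0 i j k + t1 i j k \<noteq> 0"
    by (rule sum.not_neutral_contains_not_neutral)
  moreover have "v \<in> {1..n}" using jk by (auto simp: pairs_def)
  ultimately have "(i, v) \<in> adm_sites n r t0 t1"
    using needs_adm_at_endpoints[OF jk(1)] jk(2) by (auto simp: adm_sites_def)
  then show "v \<in> snd ` adm_sites n r t0 t1" by force
qed

lemma card_demand_vertices_le_adm_cost:
  assumes "feasible_routing n c L r t0 t1"
  shows "card (demand_vertices n L) \<le> adm_cost n r t0 t1"
proof -
  have "card (demand_vertices n L) \<le> card (snd ` adm_sites n r t0 t1)"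
    using demand_vertices_subset_adm_sites[OF assms] finite_adm_sites by (intro card_mono) auto
  also have "\<dots> \<le> adm_cost n r t0 t1"
    unfolding adm_cost_eq_card_adm_sites by (rule card_image_le[OF finite_adm_sites])
  finally show ?thesis .
qed

lemma min_adms_eq_card_demand_vertices:
  assumes "feasible_routing n c L r t0 t1" "adm_cost n r t0 t1 = card (demand_vertices n L)"
  shows "min_adms n c L = card (demand_vertices n L)"
  unfolding min_adms_def
proof (rule Least_equality)
  show "\<exists>r t0 t1. feasible_routing n c L r t0 t1 \<and> adm_cost n r t0 t1 = card (demand_vertices n L)"
    using assms by blast
  show "card (demand_vertices n L) \<le> m"
    if "\<exists>r t0 t1. feasible_routing n c L r t0 t1 \<and> adm_cost n r t0 t1 = m" for m
    using that card_demand_vertices_le_adm_cost by blast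
qed

lemma needs_adm_unique_ring:
  assumes f: "feasible_routing n c L r t0 t1"
    and cost: "adm_cost n r t0 t1 = card (demand_vertices n L)"
    and "a < r" "b < r" "v \<in> {1..n}" "needs_adm n t0 t1 a v" "needs_adm n t0 t1 b v"
  shows "a = b"
proof -
  let ?S = "adm_sites n r t0 t1"
  have "card (snd ` ?S) \<le> card ?S" by (rule card_image_le[OF finite_adm_sites])
  moreover have "card ?S \<le> card (snd ` ?S)"
    using cost card_mono[OF _ demand_vertices_subset_adm_sites[OF f]] finite_adm_sites
    by (simp add: adm_cost_eq_card_adm_sites)
  ultimately have "inj_on snd ?S" by (simp add: eq_card_imp_inj_on finite_adm_sites)
  moreover have "(a, v) \<in> ?S" "(b, v) \<in> ?S" using assms(3-7) by (auto simp: adm_sites_def)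
  ultimately show ?thesis using inj_onD[of snd ?S "(a, v)" "(b, v)"] by simp
qed

lemma ring_carrying_unit_demand:
  assumes "feasible_routing n c L r t0 t1" "(j, k) \<in> pairs n" "demand L j k = 1"
  obtains i where "i < r" "t0 i j k + t1 i j k = 1"
  using feasible_routing_demand[OF assms(1,2)] assms(3) sum_eq_1_iff[of "{..<r}"] that by auto

lemma triangle_on_one_ring:
  assumes f: "feasible_routing n c L r t0 t1"
    and cost: "adm_cost n r t0 t1 = card (demand_vertices n L)"
    and tri: "1 \<le> p" "p < q" "q < s" "s \<le> n"
    and "demand L p q = 1" "demand L q s = 1" "demand L p s = 1"
  obtains a where "a < r" "t0 a p q + t1 a p q = 1" "t0 a q s + t1 a q s = 1"
    "t0 a p s + t1 a p s = 1"
proof -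
  have T: "(p, q) \<in> pairs n" "(q, s) \<in> pairs n" "(p, s) \<in> pairs n"
    using tri by (auto simp: pairs_def)
  obtain a where a: "a < r" "t0 a p q + t1 a p q = 1"
    using ring_carrying_unit_demand[OF f T(1)] assms by blast
  obtain b where b: "b < r" "t0 b q s + t1 b q s = 1"
    using ring_carrying_unit_demand[OF f T(2)] assms by blast
  obtain d where d: "d < r" "t0 d p s + t1 d p s = 1"
    using ring_carrying_unit_demand[OF f T(3)] assms by blast
  have pq: "p \<in> {1..n}" "q \<in> {1..n}" using tri by auto
  have "needs_adm n t0 t1 a p" by (rule needs_adm_at_endpoints(1)[OF T(1)]) (simp add: a(2))
  moreover have "needs_adm n t0 t1 d p" by (rule needs_adm_at_endpoints(1)[OF T(3)]) (simp add: d(2))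
  ultimately have "a = d" by (rule needs_adm_unique_ring[OF f cost a(1) d(1) pq(1)])
  have "needs_adm n t0 t1 a q" by (rule needs_adm_at_endpoints(2)[OF T(1)]) (simp add: a(2))
  moreover have "needs_adm n t0 t1 b q" by (rule needs_adm_at_endpoints(1)[OF T(2)]) (simp add: b(2))
  ultimately have "a = b" by (rule needs_adm_unique_ring[OF f cost a(1) b(1) pq(2)])
  with \<open>a = d\<close> show thesis using that a b d by simp
qed

lemma card_le_rings_carrying:
  assumes "A \<subseteq> {..<r}" "\<forall>i\<in>A. \<exists>(j, k)\<in>pairs n. t0 i j k + t1 i j k > 0"
  shows "card A \<le> rings_carrying n r t0 t1"
  unfolding rings_carrying_def using assms by (intro card_mono) auto

lemma rings_carrying_le: "rings_carrying n r t0 t1 \<le> r"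
  unfolding rings_carrying_def by (rule card_mono[of "{..<r}", simplified]) auto

lemma demand_eq_indicator:
  assumes "distinct L" "set L \<subseteq> pairs n" "(j, k) \<in> pairs n"
  shows "demand L j k = (if (j, k) \<in> set L then 1 else 0)"
proof -
  have "{p. p = (j, k) \<or> p = (k, j)} \<inter> set L = {(j, k)} \<inter> set L"
    using assms(2,3) by (auto simp: pairs_def)
  then show ?thesis using assms(1) by (simp add: demand_def distinct_length_filter)
qed

lemma demand_vertices_eq_endpoints:
  assumes "distinct L" "set L \<subseteq> pairs n"
  shows "demand_vertices n L = fst ` set L \<union> snd ` set L"
proof -
  have "demand L j k > 0 \<longleftrightarrow> (j, k) \<in> set L" if "(j, k) \<in> pairs n" for j k
    using demand_eq_indicator[OF assms that] by simp
  then have "demand_vertices n L = {v. \<exists>(j, k)\<in>set L. v = j \<or> v = k}"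
    using assms(2) unfolding demand_vertices_def by blast
  also have "\<dots> = fst ` set L \<union> snd ` set L" by force
  finally show ?thesis .
qed

definition single_route_t0 :: "(nat \<times> nat) list \<Rightarrow> (nat \<times> nat \<Rightarrow> nat) \<Rightarrow> (nat \<times> nat \<Rightarrow> bool)
    \<Rightarrow> nat \<Rightarrow> nat \<Rightarrow> nat \<Rightarrow> nat" where
  "single_route_t0 L ring via_arc1 i j k =
     (if (j, k) \<in> set L \<and> ring (j, k) = i \<and> \<not> via_arc1 (j, k) then 1 else 0)"

definition single_route_t1 :: "(nat \<times> nat) list \<Rightarrow> (nat \<times> nat \<Rightarrow> nat) \<Rightarrow> (nat \<times> nat \<Rightarrow> bool)
    \<Rightarrow> nat \<Rightarrow> nat \<Rightarrow> nat \<Rightarrow> nat" where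
  "single_route_t1 L ring via_arc1 i j k =
     (if (j, k) \<in> set L \<and> ring (j, k) = i \<and> via_arc1 (j, k) then 1 else 0)"

lemma single_route_amount:
  "single_route_t0 L ring via_arc1 i j k + single_route_t1 L ring via_arc1 i j k
     = (if (j, k) \<in> set L \<and> ring (j, k) = i then 1 else 0)"
  by (simp add: single_route_t0_def single_route_t1_def)

lemma sum_single_route_amount:
  assumes "\<forall>p\<in>set L. ring p < r"
  shows "(\<Sum>i<r. single_route_t0 L ring via_arc1 i j k + single_route_t1 L ring via_arc1 i j k)
    = (if (j, k) \<in> set L then 1 else 0)"
  using assms by (simp add: single_route_amount)

definition route_covers :: "(nat \<times> nat \<Rightarrow> bool) \<Rightarrow> nat \<times> nat \<Rightarrow> nat \<Rightarrow> bool" where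
  "route_covers via_arc1 p l \<longleftrightarrow>
     (if via_arc1 p then arc1_has_edge (fst p) (snd p) l else arc0_has_edge (fst p) (snd p) l)"

lemma pair_load_single_route:
  "pair_load (single_route_t0 L ring via_arc1) (single_route_t1 L ring via_arc1) i l p
     = (if p \<in> set L \<and> ring p = i \<and> route_covers via_arc1 p l then 1 else 0)"
  by (cases p) (simp add: pair_load_def single_route_t0_def single_route_t1_def route_covers_def)

lemma edge_load_single_route:
  assumes "distinct L" "set L \<subseteq> pairs n"
  shows "edge_load n (single_route_t0 L ring via_arc1) (single_route_t1 L ring via_arc1) i l
    = length (filter (\<lambda>p. ring p = i \<and> route_covers via_arc1 p l) L)"
proof -
  have "edge_load n (single_route_t0 L ring via_arc1) (single_route_t1 L ring via_arc1) i l
      = sum (pair_load (single_route_t0 L ring via_arc1) (single_route_t1 L ring via_arc1) i l) (set L)"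
    by (rule edge_load_eq_sum_support[OF assms(2)]) (auto simp: single_route_t0_def single_route_t1_def)
  also have "\<dots> = card {p \<in> set L. ring p = i \<and> route_covers via_arc1 p l}"
    by (simp add: pair_load_single_route sum.If_cases Int_def conj_commute)
  also have "\<dots> = length (filter (\<lambda>p. ring p = i \<and> route_covers via_arc1 p l) L)"
    using assms(1) by (simp add: distinct_length_filter Int_def conj_commute)
  finally show ?thesis .
qed

lemma feasible_single_route:
  assumes L: "distinct L" "set L \<subseteq> pairs n" and rings: "\<forall>p\<in>set L. ring p < r"
    and cap: "\<forall>i\<in>{..<r}. \<forall>l\<in>{1..n}. length (filter (\<lambda>p. ring p = i \<and> route_covers via_arc1 p l) L) \<le> c"
  shows "feasible_routing n c L r (single_route_t0 L ring via_arc1) (single_route_t1 L ring via_arc1)"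
  unfolding feasible_routing_def
proof (intro conjI allI impI ballI; clarify?)
  fix j k assume "(j, k) \<in> pairs n"
  then show "(\<Sum>i<r. single_route_t0 L ring via_arc1 i j k + single_route_t1 L ring via_arc1 i j k)
      = demand L j k"
    by (simp add: sum_single_route_amount[OF rings] demand_eq_indicator[OF L])
next
  fix i l assume "i < r" "l \<in> {1..n}"
  then show "edge_load n (single_route_t0 L ring via_arc1) (single_route_t1 L ring via_arc1) i l \<le> c"
    using cap by (simp add: edge_load_single_route[OF L])
qed

lemma adm_cost_single_route_le:
  "adm_cost n r (single_route_t0 L ring via_arc1) (single_route_t1 L ring via_arc1)
     \<le> card ((\<lambda>(j, k). (ring (j, k), j)) ` set L \<union> (\<lambda>(j, k). (ring (j, k), k)) ` set L)"
  unfolding adm_cost_eq_card_adm_sites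
proof (rule card_mono)
  show "adm_sites n r (single_route_t0 L ring via_arc1) (single_route_t1 L ring via_arc1)
     \<subseteq> (\<lambda>(j, k). (ring (j, k), j)) ` set L \<union> (\<lambda>(j, k). (ring (j, k), k)) ` set L"
  proof
    fix x assume "x \<in> adm_sites n r (single_route_t0 L ring via_arc1) (single_route_t1 L ring via_arc1)"
    then obtain i v j k where "x = (i, v)" "v = j \<or> v = k" "(j, k) \<in> set L" "ring (j, k) = i"
      by (auto simp: adm_sites_def needs_adm_def single_route_amount split: if_splits)
    then show "x \<in> (\<lambda>(j, k). (ring (j, k), j)) ` set L \<union> (\<lambda>(j, k). (ring (j, k), k)) ` set L"
      by force
  qed
qed simp

definition three_triangles :: "(nat \<times> nat) list" where
  "three_triangles = [(1,2),(1,3),(2,3),(4,5),(4,6),(5,6),(7,8),(7,9),(8,9)]"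

lemma distinct_three_triangles: "distinct three_triangles"
  by (simp add: three_triangles_def)

lemma three_triangles_subset_pairs: "set three_triangles \<subseteq> pairs 9"
  by (simp add: three_triangles_def pairs_def)

lemma demand_three_triangles:
  "(j, k) \<in> pairs 9 \<Longrightarrow> demand three_triangles j k = (if (j, k) \<in> set three_triangles then 1 else 0)"
  by (rule demand_eq_indicator[OF distinct_three_triangles three_triangles_subset_pairs])

lemma demand_vertices_three_triangles: "demand_vertices 9 three_triangles = {1..9}"
  unfolding demand_vertices_eq_endpoints[OF distinct_three_triangles three_triangles_subset_pairs]
  by (simp add: three_triangles_def eval_nat_numeral atLeastAtMostSuc_conv insert_commute)

lemma optimal_routing_three_triangles_needs_three_rings:
  assumes f: "feasible_routing 9 1 three_triangles r t0 t1" and cost: "adm_cost 9 r t0 t1 = 9"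
  shows "rings_carrying 9 r t0 t1 \<ge> 3"
proof -
  have opt: "adm_cost 9 r t0 t1 = card (demand_vertices 9 three_triangles)"
    using cost by (simp add: demand_vertices_three_triangles)
  have dem: "demand three_triangles j k = 1" if "(j, k) \<in> set three_triangles" for j k
    using that three_triangles_subset_pairs demand_three_triangles by auto
  note on_one_ring = triangle_on_one_ring[OF f opt _ _ _ _ dem dem dem]
  obtain a where a: "a < r" "t0 a 1 2 + t1 a 1 2 = 1" "t0 a 2 3 + t1 a 2 3 = 1" "t0 a 1 3 + t1 a 1 3 = 1"
    using on_one_ring[of 1 2 3] by (auto simp: three_triangles_def)
  obtain b where b: "b < r" "t0 b 4 5 + t1 b 4 5 = 1" "t0 b 5 6 + t1 b 5 6 = 1" "t0 b 4 6 + t1 b 4 6 = 1"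
    using on_one_ring[of 4 5 6] by (auto simp: three_triangles_def)
  obtain d where d: "d < r" "t0 d 7 8 + t1 d 7 8 = 1" "t0 d 8 9 + t1 d 8 9 = 1" "t0 d 7 9 + t1 d 7 9 = 1"
    using on_one_ring[of 7 8 9] by (auto simp: three_triangles_def)
  note saturated = triangle_saturates_ring[OF feasible_routing_capacity[OF f]]
  have "a \<noteq> b" using saturated[OF a(1) _ _ _ _ a(2-4), of 4 5] b by (auto simp: pairs_def)
  moreover have "a \<noteq> d" using saturated[OF a(1) _ _ _ _ a(2-4), of 7 8] d by (auto simp: pairs_def)
  moreover have "b \<noteq> d" using saturated[OF b(1) _ _ _ _ b(2-4), of 7 8] d by (auto simp: pairs_def)
  moreover have "card {a, b, d} \<le> rings_carrying 9 r t0 t1"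
  proof (rule card_le_rings_carrying)
    show "{a, b, d} \<subseteq> {..<r}" using a(1) b(1) d(1) by simp
    have "(1, 2) \<in> pairs 9" "(4, 5) \<in> pairs 9" "(7, 8) \<in> pairs 9" by (simp_all add: pairs_def)
    moreover have "t0 a 1 2 + t1 a 1 2 > 0" "t0 b 4 5 + t1 b 4 5 > 0" "t0 d 7 8 + t1 d 7 8 > 0"
      using a(2) b(2) d(2) by simp_all
    ultimately show "\<forall>i\<in>{a, b, d}. \<exists>(j, k)\<in>pairs 9. t0 i j k + t1 i j k > 0"
      by blast
  qed
  ultimately show ?thesis by simp
qed

lemma lessThan_2: "{..<2::nat} = {0, 1}"
  by auto

lemma lessThan_3: "{..<3::nat} = {0, 1, 2}"
  by auto

lemma atLeastAtMost_1_9: "{1..9::nat} = {1, 2, 3, 4, 5, 6, 7, 8, 9}"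
  by auto

definition triangle_ring :: "nat \<times> nat \<Rightarrow> nat" where
  "triangle_ring p = (fst p - 1) div 3"

definition long_chord :: "nat \<times> nat \<Rightarrow> bool" where
  "long_chord p \<longleftrightarrow> snd p - fst p = 2"

definition ring_by_span :: "nat \<times> nat \<Rightarrow> nat" where
  "ring_by_span p = snd p - fst p - 1"

abbreviation triangle_route_t0 :: "nat \<Rightarrow> nat \<Rightarrow> nat \<Rightarrow> nat" where
  "triangle_route_t0 \<equiv> single_route_t0 three_triangles triangle_ring long_chord"

abbreviation triangle_route_t1 :: "nat \<Rightarrow> nat \<Rightarrow> nat \<Rightarrow> nat" where
  "triangle_route_t1 \<equiv> single_route_t1 three_triangles triangle_ring long_chord"

abbreviation span_route_t0 :: "nat \<Rightarrow> nat \<Rightarrow> nat \<Rightarrow> nat" where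
  "span_route_t0 \<equiv> single_route_t0 three_triangles ring_by_span (\<lambda>_. False)"

abbreviation span_route_t1 :: "nat \<Rightarrow> nat \<Rightarrow> nat \<Rightarrow> nat" where
  "span_route_t1 \<equiv> single_route_t1 three_triangles ring_by_span (\<lambda>_. False)"

lemma feasible_triangle_route: "feasible_routing 9 1 three_triangles 3 triangle_route_t0 triangle_route_t1"
proof (rule feasible_single_route[OF distinct_three_triangles three_triangles_subset_pairs])
  show "\<forall>p\<in>set three_triangles. triangle_ring p < 3"
    by (simp add: three_triangles_def triangle_ring_def)
  show "\<forall>i\<in>{..<3}. \<forall>l\<in>{1..9}.
      length (filter (\<lambda>p. triangle_ring p = i \<and> route_covers long_chord p l) three_triangles) \<le> 1"
    unfolding lessThan_3 atLeastAtMost_1_9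
    by (simp add: three_triangles_def triangle_ring_def long_chord_def route_covers_def
        arc0_has_edge_def arc1_has_edge_def)
qed

lemma adm_cost_triangle_route: "adm_cost 9 3 triangle_route_t0 triangle_route_t1 = 9"
proof -
  have "adm_cost 9 3 triangle_route_t0 triangle_route_t1 \<le> 9"
    using adm_cost_single_route_le[of 9 3 three_triangles triangle_ring long_chord]
    by (simp add: three_triangles_def triangle_ring_def card_insert_if)
  then show ?thesis
    using card_demand_vertices_le_adm_cost[OF feasible_triangle_route]
    by (simp add: demand_vertices_three_triangles)
qed

lemma feasible_span_route: "feasible_routing 9 1 three_triangles 2 span_route_t0 span_route_t1"
proof (rule feasible_single_route[OF distinct_three_triangles three_triangles_subset_pairs])
  show "\<forall>p\<in>set three_triangles. ring_by_span p < 2"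
    by (simp add: three_triangles_def ring_by_span_def)
  show "\<forall>i\<in>{..<2}. \<forall>l\<in>{1..9}.
      length (filter (\<lambda>p. ring_by_span p = i \<and> route_covers (\<lambda>_. False) p l) three_triangles) \<le> 1"
    unfolding lessThan_2 atLeastAtMost_1_9
    by (simp add: three_triangles_def ring_by_span_def route_covers_def
        arc0_has_edge_def arc1_has_edge_def)
qed

lemma rings_carrying_span_route: "rings_carrying 9 2 span_route_t0 span_route_t1 = 2"
proof -
  have "card {0, 1::nat} \<le> rings_carrying 9 2 span_route_t0 span_route_t1"
  proof (rule card_le_rings_carrying)
    have "(1, 2) \<in> pairs 9" "(1, 3) \<in> pairs 9" by (simp_all add: pairs_def)
    moreover have "span_route_t0 0 1 2 + span_route_t1 0 1 2 > 0"
      "span_route_t0 1 1 3 + span_route_t1 1 1 3 > 0"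
      by (simp_all add: single_route_amount three_triangles_def ring_by_span_def)
    ultimately show "\<forall>i\<in>{0, 1}. \<exists>(j, k)\<in>pairs 9. span_route_t0 i j k + span_route_t1 i j k > 0"
      by blast
  qed auto
  then show ?thesis using rings_carrying_le[of 9 2 span_route_t0 span_route_t1] by simp
qed

theorem mainTheorem5:
  fixes L :: "(nat \<times> nat) list"
  assumes "L = [(1,2),(1,3),(2,3),(4,5),(4,6),(5,6),(7,8),(7,9),(8,9)]"
  shows "min_adms 9 1 L = 9
    \<and> (\<forall>r t0 t1. feasible_routing 9 1 L r t0 t1 \<and> adm_cost 9 r t0 t1 = 9
          \<longrightarrow> rings_carrying 9 r t0 t1 \<ge> 3)
    \<and> (\<exists>r t0 t1. feasible_routing 9 1 L r t0 t1 \<and> rings_carrying 9 r t0 t1 = 2)"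
proof -
  have L: "L = three_triangles" using assms by (simp add: three_triangles_def)
  have "min_adms 9 1 three_triangles = 9"
    using min_adms_eq_card_demand_vertices[OF feasible_triangle_route]
      adm_cost_triangle_route demand_vertices_three_triangles by simp
  then show ?thesis
    unfolding L
    using optimal_routing_three_triangles_needs_three_rings feasible_span_route
      rings_carrying_span_route by blast
qed

end
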